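(* Let $d=1$, $c(x,y)=\frac12|x-y|^2$, $\nu=\frac12\delta_0+\frac12\delta_1$, let $p\in[1,\infty)$, and let $\mathcal P_{\mathrm{Lip}}(\mathbb{R})$ denote the set of probability measures on $\mathbb{R}$ with Lipschitz densities. Then there is a constant $c_p>0$ such that for all sufficiently large $n$, $$\inf_{T^{(n)}}\ \sup_{\mu\in\mathcal P_{\mathrm{Lip}}(\mathbb{R})}\ \mathbb{E}_\mu\Big[\big\|T^{(n)}-T_{\mu,\nu}\big\|^p_{L^p(\mu)}\Big]\ \ge\ \frac{c_p}{\sqrt n},$$ where the infimum is over all maps $T^{(n)}$ constructed (measurably) from $n$ i.i.d. samples of $\mu$.
   Context: $T_{\mu,\nu}$ denotes the optimal transport map from $\mu$ to $\nu$ for the quadratic cost (the unique, up to $\mu$-null sets, minimizer of $\int c(x,T(x))d\mu(x)$ among maps pushing $\mu$ to $\nu$). $\mathbb{E}_\mu$ denotes expectation over the $n$ i.i.d. samples drawn from $\mu$. *)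

theory Defs
  imports "HOL-Probability.Probability"
begin

definition nu_half :: "real measure" where
  "nu_half = distr (measure_pmf (bernoulli_pmf (1/2))) borel (\<lambda>b. if b then 1 else 0)"

definition P_Lip :: "real measure set" where
  "P_Lip = {M. prob_space M \<and>
      (\<exists>f :: real \<Rightarrow> real. (\<forall>x. 0 \<le> f x) \<and> (\<exists>L. L-lipschitz_on UNIV f) \<and>
                M = density lborel (\<lambda>x. ennreal (f x)))}"

definition ot_cost :: "real measure \<Rightarrow> (real \<Rightarrow> real) \<Rightarrow> ennreal" where
  "ot_cost \<mu> T = (\<integral>\<^sup>+ x. ennreal ((x - T x)\<^sup>2 / 2) \<partial>\<mu>)"

definition is_ot_map :: "real measure \<Rightarrow> real measure \<Rightarrow> (real \<Rightarrow> real) \<Rightarrow> bool" where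
  "is_ot_map \<mu> \<nu> T \<longleftrightarrow> T \<in> borel_measurable \<mu> \<and> distr \<mu> borel T = \<nu> \<and>
     (\<forall>S \<in> borel_measurable \<mu>. distr \<mu> borel S = \<nu> \<longrightarrow> ot_cost \<mu> T \<le> ot_cost \<mu> S)"

text \<open>An estimator built from n samples: a jointly measurable map (X, x) |-> Tn X x,
  where X ranges over sample vectors indexed by {..<n}.\<close>
definition estimator :: "nat \<Rightarrow> ((nat \<Rightarrow> real) \<Rightarrow> real \<Rightarrow> real) \<Rightarrow> bool" where
  "estimator n Tn \<longleftrightarrow>
     (\<lambda>(X, x). Tn X x) \<in> borel_measurable (PiM {..<n} (\<lambda>_. borel) \<Otimes>\<^sub>M borel)"

definition risk :: "real \<Rightarrow> nat \<Rightarrow> ((nat \<Rightarrow> real) \<Rightarrow> real \<Rightarrow> real) \<Rightarrow> real measure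
                     \<Rightarrow> (real \<Rightarrow> real) \<Rightarrow> ennreal" where
  "risk p n Tn \<mu> T0 =
     (\<integral>\<^sup>+ X. (\<integral>\<^sup>+ x. ennreal (\<bar>Tn X x - T0 x\<bar> powr p) \<partial>\<mu>) \<partial>(PiM {..<n} (\<lambda>_. \<mu>)))"

end

(*
  Le Cam's two-point method. Let mu_0 have the tent density max 0 (1 - |x|) and let mu_e add
  e times an odd Lipschitz bump that moves mass of order e from (-1, 0) to (0, 1), with
  e = 1 / sqrt n. Onto nu = (delta_0 + delta_1) / 2 the optimal map of an atomless, compactly
  supported measure is the indicator of the half-line above its median, by an exchange argument
  on the quadratic cost. The median of mu_0 is 0 while that of mu_e exceeds e / 16, so on
  R = (0, e / 16] the two optimal maps are 1 and 0, and every estimate is at distance at least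
  1/2 from one of them: the sum of the two risks restricted to R is at least of order
  mu_0(R) ~ e. The likelihood ratio L of the n-fold products satisfies E_0 L^2 <= (1 + e^2)^n <= 3,
  hence E_0 min(1, L) >= 1/4, so no estimator can favour one hypothesis without paying this
  amount on the other.
*)
theory Submission
  imports Defs
begin

section \<open>Optimal transport onto two equal atoms\<close>

lemma emeasure_nu_half:
  assumes "A \<in> sets borel"
  shows "emeasure nu_half A = (indicator A 0 + indicator A 1) / 2"
proof -
  let ?g = "\<lambda>b::bool. if b then 1 else (0::real)"
  have "?g -` A = (if 0 \<in> A then {False} else {}) \<union> (if 1 \<in> A then {True} else {})"
    by (auto split: if_splits)
  moreover have "emeasure nu_half A = emeasure (measure_pmf (bernoulli_pmf (1/2))) (?g -` A)"
    unfolding nu_half_def using assms by (simp add: emeasure_distr)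
  ultimately show ?thesis
    by (cases "(0::real) \<in> A"; cases "(1::real) \<in> A")
       (simp_all add: emeasure_measure_pmf_finite divide_ennreal_def
         ennreal_divide_self[of 2, unfolded divide_ennreal_def])
qed

lemma distr_indicator_median_eq_nu_half:
  assumes "prob_space M" and sets_M: "sets M = sets borel" and median: "measure M {..m} = 1/2"
  shows "distr M borel (indicator {m<..} :: real \<Rightarrow> real) = nu_half"
proof (rule measure_eqI)
  interpret prob_space M by fact
  have [simp]: "space M = UNIV" and [measurable_cong]: "sets M = sets borel"
    using sets_eq_imp_space_eq[OF sets_M] sets_M by auto
  have "measure M {m<..} = 1 - measure M {..m}"
    using prob_compl[of "{..m}"] by (simp add: Compl_eq_Diff_UNIV[symmetric] Compl_atMost)
  then have "measure M {m<..} = 1/2"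
    using median by simp
  moreover have "ennreal (1/2) = 1/2"
    by (simp add: divide_ennreal_def)
  ultimately have halves: "emeasure M {..m} = 1/2" "emeasure M {m<..} = 1/2"
    by (simp_all only: emeasure_eq_measure median)
  fix A :: "real set" assume "A \<in> sets (distr M borel (indicator {m<..}))"
  then have A: "A \<in> sets borel" by simp
  have "indicator {m<..} -` A = (if 0 \<in> A then {..m} else {}) \<union> (if 1 \<in> A then {m<..} else {})"
    by (auto simp: indicator_def of_bool_def split: if_splits)
  moreover have "emeasure M ({..m} \<union> {m<..}) = emeasure M {..m} + emeasure M {m<..}"
    by (rule plus_emeasure[symmetric]) auto
  ultimately show "emeasure (distr M borel (indicator {m<..})) A = emeasure nu_half A"
    using A halves by (cases "(0::real) \<in> A"; cases "(1::real) \<in> A")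
      (simp_all add: emeasure_distr emeasure_nu_half divide_ennreal_def mult_2)
qed (simp add: nu_half_def)

lemma distr_eq_nu_half_values:
  assumes "prob_space M" and sets_M: "sets M = sets borel"
    and T: "T \<in> borel_measurable M" and push: "distr M borel T = nu_half"
  shows "AE x in M. T x \<in> {0, 1}" and "(\<integral>x. T x \<partial>M) = 1/2"
proof -
  interpret prob_space M by fact
  have [simp]: "space M = UNIV"
    using sets_eq_imp_space_eq[OF sets_M] by simp
  have preimage: "emeasure M (T -` A) = emeasure nu_half A" if "A \<in> sets borel" for A
    using that T by (simp flip: push add: emeasure_distr)
  have "T -` (- {0, 1}) \<in> null_sets M"
    using preimage[of "- {0, 1}"] measurable_sets[OF T, of "- {0, 1}"]
    by (simp add: emeasure_nu_half null_sets_def)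
  then show T01: "AE x in M. T x \<in> {0, 1}"
    by (rule AE_I') auto
  have "emeasure M (T -` {1}) = 1/2"
    using preimage[of "{1}"] by (simp add: emeasure_nu_half)
  then have "measure M (T -` {1}) = 1/2"
    by (simp add: emeasure_eq_measure divide_ennreal_def flip: ennreal_half)
  moreover have "(\<integral>x. T x \<partial>M) = (\<integral>x. indicator (T -` {1}) x \<partial>M)"
    using T01 measurable_sets[OF T, of "{1}"] T
    by (intro integral_cong_AE) (auto simp: indicator_def)
  ultimately show "(\<integral>x. T x \<partial>M) = 1/2"
    by simp
qed

lemma quadratic_cost_exchange:
  fixes x m s t :: real
  assumes "s \<in> {0, 1}" and "t \<in> {0, 1}"
  shows "(x - t)\<^sup>2 / 2 = (x - s)\<^sup>2 / 2 + (s - t) * (x - m) + (s - t) * (m - 1/2)"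
  using assms by (auto simp: power2_eq_square field_simps)

lemma ot_cost_eq_integral:
  assumes "finite_measure M" and sets_M: "sets M = sets borel"
    and support: "AE x in M. \<bar>x\<bar> \<le> B"
    and T: "T \<in> borel_measurable M" and T_bounded: "AE x in M. \<bar>T x\<bar> \<le> 1"
  shows "integrable M (\<lambda>x. (x - T x)\<^sup>2 / 2)"
    and "ot_cost M T = ennreal (\<integral>x. (x - T x)\<^sup>2 / 2 \<partial>M)"
proof -
  interpret finite_measure M by fact
  have "(\<lambda>x. x) \<in> borel_measurable M"
    using measurable_ident_sets[OF sets_M] by simp
  then have "(\<lambda>x. (x - T x)\<^sup>2 / 2) \<in> borel_measurable M"
    using T by measurable
  moreover have "AE x in M. norm ((x - T x)\<^sup>2 / 2) \<le> (\<bar>B\<bar> + 1)\<^sup>2 / 2"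
    using support T_bounded
  proof eventually_elim
    case (elim x)
    have "\<bar>x - T x\<bar> \<le> \<bar>B\<bar> + 1"
      using elim by linarith
    from power_mono[OF this abs_ge_zero, of 2] show ?case
      by simp
  qed
  ultimately show int: "integrable M (\<lambda>x. (x - T x)\<^sup>2 / 2)"
    by (rule integrable_const_bound[rotated])
  show "ot_cost M T = ennreal (\<integral>x. (x - T x)\<^sup>2 / 2 \<partial>M)"
    unfolding ot_cost_def by (rule nn_integral_eq_integral[OF int]) simp
qed

lemma quadratic_cost_excess_over_median_threshold:
  fixes M :: "real measure" and m :: real
  defines "S \<equiv> indicator {m<..} :: real \<Rightarrow> real"
  assumes M: "prob_space M" and sets_M: "sets M = sets borel"
    and median: "measure M {..m} = 1/2" and support: "AE x in M. \<bar>x\<bar> \<le> B"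
    and T: "T \<in> borel_measurable M" and push_T: "distr M borel T = nu_half"
  shows "integrable M (\<lambda>x. (S x - T x) * (x - m))"
    and "(\<integral>x. (x - T x)\<^sup>2 / 2 \<partial>M)
        = (\<integral>x. (x - S x)\<^sup>2 / 2 \<partial>M) + (\<integral>x. (S x - T x) * (x - m) \<partial>M)"
proof -
  interpret prob_space M by fact
  have meas_M: "borel_measurable M = borel_measurable borel"
    by (rule measurable_cong_sets[OF sets_M refl])
  have S: "S \<in> borel_measurable M"
    by (simp add: meas_M S_def)
  have push_S: "distr M borel S = nu_half"
    unfolding S_def using distr_indicator_median_eq_nu_half[OF M sets_M median] .
  note T01 = distr_eq_nu_half_values(1)[OF M sets_M T push_T]
  have T_bounded: "AE x in M. \<bar>T x\<bar> \<le> 1"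
    using T01 by eventually_elim auto
  have S_bounded: "AE x in M. \<bar>S x\<bar> \<le> 1"
    by (simp add: S_def)
  have "(\<lambda>x. (S x - T x) * (x - m)) \<in> borel_measurable M"
    using S T by (simp add: meas_M)
  moreover have "AE x in M. norm ((S x - T x) * (x - m)) \<le> 2 * (\<bar>B\<bar> + \<bar>m\<bar>)"
    using support S_bounded T_bounded
  proof eventually_elim
    case (elim x)
    then have "\<bar>S x - T x\<bar> \<le> 2" and "\<bar>x - m\<bar> \<le> \<bar>B\<bar> + \<bar>m\<bar>"
      by linarith+
    from mult_mono[OF this _ abs_ge_zero] show ?case
      by (simp add: abs_mult)
  qed
  ultimately show int_G: "integrable M (\<lambda>x. (S x - T x) * (x - m))"
    by (rule integrable_const_bound[rotated])
  have int_S: "integrable M S" and int_T: "integrable M T"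
    using integrable_const_bound[OF _ S] integrable_const_bound[OF _ T] S_bounded T_bounded
    by auto
  note cost_S = ot_cost_eq_integral(1)[OF finite_measure_axioms sets_M support S S_bounded]
  have "AE x in M. (x - T x)\<^sup>2 / 2 = (x - S x)\<^sup>2 / 2 + (S x - T x) * (x - m) + (m - 1/2) * (S x - T x)"
    using T01
  proof eventually_elim
    case (elim x)
    have "S x \<in> {0, 1}"
      by (simp add: S_def indicator_def)
    from quadratic_cost_exchange[OF this elim, of x m] show ?case
      by (simp add: mult.commute)
  qed
  then have "(\<integral>x. (x - T x)\<^sup>2 / 2 \<partial>M)
      = (\<integral>x. (x - S x)\<^sup>2 / 2 + (S x - T x) * (x - m) + (m - 1/2) * (S x - T x) \<partial>M)"
    using S T by (intro integral_cong_AE) (simp_all add: meas_M)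
  also have "\<dots> = (\<integral>x. (x - S x)\<^sup>2 / 2 \<partial>M) + (\<integral>x. (S x - T x) * (x - m) \<partial>M)
      + (m - 1/2) * ((\<integral>x. S x \<partial>M) - (\<integral>x. T x \<partial>M))"
    using cost_S int_G int_S int_T by simp
  also have "(\<integral>x. S x \<partial>M) = (\<integral>x. T x \<partial>M)"
    using distr_eq_nu_half_values(2)[OF M sets_M S push_S] distr_eq_nu_half_values(2)[OF M sets_M T push_T]
    by simp
  finally show "(\<integral>x. (x - T x)\<^sup>2 / 2 \<partial>M)
        = (\<integral>x. (x - S x)\<^sup>2 / 2 \<partial>M) + (\<integral>x. (S x - T x) * (x - m) \<partial>M)"
    by simp
qed

lemma (in real_distribution) median_above:
  assumes no_atoms: "\<And>x. measure M {x} = 0"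
    and below: "measure M {..a} < 1/2" and above: "1/2 \<le> measure M {..c}"
  shows "\<exists>m>a. measure M {..m} = 1/2"
proof -
  have "a \<le> c"
    using below above cdf_nondecreasing[of c a] by (force simp: cdf_def)
  moreover have "continuous_on {a..c} (cdf M)"
    using no_atoms isCont_cdf by (blast intro: continuous_at_imp_continuous_on)
  ultimately obtain m where "a \<le> m" and "cdf M m = 1/2"
    using IVT'[of "cdf M" a "1/2" c] below above by (auto simp: cdf_def)
  moreover from this have "m \<noteq> a"
    using below by (auto simp: cdf_def)
  ultimately have "a < m" and "measure M {..m} = 1/2"
    by (auto simp: cdf_def)
  then show ?thesis
    by blast
qed

lemma is_ot_map_nu_half_eq_median_threshold:
  fixes M :: "real measure"
  assumes M: "prob_space M" and sets_M: "sets M = sets borel"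
    and no_atom: "emeasure M {m} = 0" and median: "measure M {..m} = 1/2"
    and support: "AE x in M. \<bar>x\<bar> \<le> B" and ot: "is_ot_map M nu_half T"
  shows "AE x in M. T x = indicator {m<..} x"
proof -
  interpret prob_space M by fact
  define S :: "real \<Rightarrow> real" where "S = indicator {m<..}"
  define G where "G = (\<lambda>x. (S x - T x) * (x - m))"
  have S: "S \<in> borel_measurable M"
    by (simp add: measurable_cong_sets[OF sets_M refl] S_def)
  have T: "T \<in> borel_measurable M" and push_T: "distr M borel T = nu_half"
    using ot by (auto simp: is_ot_map_def)
  note T01 = distr_eq_nu_half_values(1)[OF M sets_M T push_T]
  have T_bounded: "AE x in M. \<bar>T x\<bar> \<le> 1"
    using T01 by eventually_elim auto
  note excess = quadratic_cost_excess_over_median_threshold[OF M sets_M median support T push_T,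
      folded S_def, folded G_def]
  have "ot_cost M T \<le> ot_cost M S"
    using ot S distr_indicator_median_eq_nu_half[OF M sets_M median]
    by (auto simp: is_ot_map_def S_def)
  then have "(\<integral>x. (x - T x)\<^sup>2 / 2 \<partial>M) \<le> (\<integral>x. (x - S x)\<^sup>2 / 2 \<partial>M)"
    using ot_cost_eq_integral(2)[OF finite_measure_axioms sets_M support] S T T_bounded
    by (simp add: S_def ennreal_le_iff integral_nonneg)
  then have "integral\<^sup>L M G \<le> 0"
    using excess(2) by simp
  moreover have G_nonneg: "AE x in M. 0 \<le> G x"
    using T01 by eventually_elim (auto simp: G_def S_def indicator_def)
  ultimately have "AE x in M. G x = 0"
    using integral_nonneg_eq_0_iff_AE[OF excess(1)] integral_nonneg_AE[OF G_nonneg] by simp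
  moreover have "AE x in M. x \<noteq> m"
    using no_atom sets_M by (intro AE_I'[of "{m}"]) auto
  ultimately show ?thesis
    using T01 by eventually_elim (auto simp: G_def S_def indicator_def)
qed

section \<open>Likelihood ratios of product measures\<close>

lemma indicator_PiE_eq_prod:
  assumes "X \<in> extensional I" and "finite I"
  shows "indicator (Pi\<^sub>E I A) X = (\<Prod>i\<in>I. indicator (A i) (X i) :: ennreal)"
  using assms by (auto simp: indicator_def PiE_iff intro!: prod_zero)

lemma PiM_density:
  assumes I: "finite I"
    and M: "\<And>i. sigma_finite_measure (M i)" and M_f: "\<And>i. sigma_finite_measure (density (M i) (f i))"
    and f: "\<And>i. i \<in> I \<Longrightarrow> f i \<in> borel_measurable (M i)"
  shows "PiM I (\<lambda>i. density (M i) (f i)) = density (PiM I M) (\<lambda>X. \<Prod>i\<in>I. f i (X i))"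
proof -
  interpret M: product_sigma_finite M
    using M by (simp add: product_sigma_finite_def)
  interpret M_f: product_sigma_finite "\<lambda>i. density (M i) (f i)"
    using M_f by (simp add: product_sigma_finite_def)
  have f_prod[measurable]: "(\<lambda>X. \<Prod>i\<in>I. f i (X i)) \<in> borel_measurable (PiM I M)"
    using f by (intro borel_measurable_prod_ennreal measurable_compose[OF measurable_component_singleton]) auto
  show ?thesis
  proof (rule M_f.PiM_eqI[symmetric, OF I])
    show "sets (density (PiM I M) (\<lambda>X. \<Prod>i\<in>I. f i (X i))) = sets (PiM I (\<lambda>i. density (M i) (f i)))"
      unfolding sets_density by (rule sets_PiM_cong) simp_all
  next
    fix A assume A: "\<And>i. i \<in> I \<Longrightarrow> A i \<in> sets (density (M i) (f i))"
    then have "Pi\<^sub>E I A \<in> sets (PiM I M)"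
      by (intro sets_PiM_I_finite I) auto
    then have "emeasure (density (PiM I M) (\<lambda>X. \<Prod>i\<in>I. f i (X i))) (Pi\<^sub>E I A)
        = (\<integral>\<^sup>+ X. (\<Prod>i\<in>I. f i (X i) * indicator (A i) (X i)) \<partial>PiM I M)"
      using I by (auto simp: emeasure_density space_PiM PiE_iff indicator_PiE_eq_prod prod.distrib
          intro!: nn_integral_cong)
    also have "\<dots> = (\<Prod>i\<in>I. \<integral>\<^sup>+ x. f i x * indicator (A i) x \<partial>M i)"
      using A f I by (intro M.product_nn_integral_prod) auto
    also have "\<dots> = (\<Prod>i\<in>I. emeasure (density (M i) (f i)) (A i))"
      using A f by (intro prod.cong) (auto simp: emeasure_density)
    finally show "emeasure (density (PiM I M) (\<lambda>X. \<Prod>i\<in>I. f i (X i))) (Pi\<^sub>E I A)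
        = (\<Prod>i\<in>I. emeasure (density (M i) (f i)) (A i))" .
  qed
qed

lemma nn_integral_prod_iid:
  assumes I: "finite I" and M: "sigma_finite_measure M" and f: "f \<in> borel_measurable M"
  shows "(\<integral>\<^sup>+ X. (\<Prod>i\<in>I. f (X i)) \<partial>PiM I (\<lambda>_. M)) = (\<integral>\<^sup>+ x. f x \<partial>M) ^ card I"
proof -
  interpret product_sigma_finite "\<lambda>_. M"
    using M by (simp add: product_sigma_finite_def)
  show ?thesis
    using product_nn_integral_prod[OF I, of "\<lambda>_. f"] f by simp
qed

lemma nn_integral_square_le:
  fixes f :: "'a \<Rightarrow> real"
  assumes "prob_space M" and f: "f \<in> borel_measurable M" and mean: "(\<integral>\<^sup>+ x. f x \<partial>M) = 1"
    and nonneg: "\<And>x. 0 \<le> f x" and close: "\<And>x. \<bar>f x - 1\<bar> \<le> e"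
  shows "(\<integral>\<^sup>+ x. (f x)\<^sup>2 \<partial>M) \<le> ennreal (1 + e\<^sup>2)"
proof -
  interpret prob_space M by fact
  have "(\<integral>\<^sup>+ x. (f x)\<^sup>2 \<partial>M) + 1 = (\<integral>\<^sup>+ x. ennreal ((f x)\<^sup>2 + 1) \<partial>M)"
    using f by (simp add: nn_integral_add emeasure_space_1)
  also have "\<dots> \<le> (\<integral>\<^sup>+ x. 2 * ennreal (f x) + ennreal (e\<^sup>2) \<partial>M)"
  proof (rule nn_integral_mono)
    fix x
    have "(f x - 1)\<^sup>2 \<le> e\<^sup>2"
      using close[of x] by (metis abs_le_square_iff abs_of_nonneg abs_ge_zero order_trans)
    then have "(f x)\<^sup>2 + 1 \<le> 2 * f x + e\<^sup>2"
      by (simp add: power2_eq_square algebra_simps)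
    then have "ennreal ((f x)\<^sup>2 + 1) \<le> ennreal (2 * f x + e\<^sup>2)"
      by (rule ennreal_leI)
    then show "ennreal ((f x)\<^sup>2 + 1) \<le> 2 * ennreal (f x) + ennreal (e\<^sup>2)"
      using nonneg[of x] by (simp add: ennreal_plus ennreal_mult)
  qed
  also have "\<dots> = ennreal (1 + e\<^sup>2) + 1"
    using f mean by (simp add: nn_integral_add nn_integral_cmult emeasure_space_1 ennreal_plus add_ac
        flip: one_add_one)
  finally show ?thesis
    by (simp add: ennreal_plus add.commute)
qed

lemma one_add_power_le_exp: "0 \<le> x \<Longrightarrow> (1 + x) ^ n \<le> exp (real n * x)"
  using power_mono[OF exp_ge_add_one_self, of x n] by (simp add: exp_of_nat_mult)

lemma ennreal_le_min_one_add_square: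
  fixes z :: ennreal
  shows "z \<le> min 1 z + ennreal (1/4) * z\<^sup>2"
proof (cases z)
  case (real r)
  have "r \<le> min 1 r + 1/4 * r\<^sup>2"
  proof (cases "r \<le> 1")
    case False
    have "0 \<le> (r/2 - 1)\<^sup>2"
      by simp
    then show ?thesis
      using False by (simp add: power2_eq_square field_simps)
  qed simp
  moreover have "min 1 z = ennreal (min 1 r)"
    using real by (auto simp: min_def)
  ultimately show ?thesis
    using real by (simp add: ennreal_power ennreal_leI flip: ennreal_mult ennreal_plus del: ennreal_plus)
qed (simp add: ennreal_mult_top)

lemma nn_integral_min_one_ge:
  assumes L: "L \<in> borel_measurable M" and mean: "(\<integral>\<^sup>+ x. L x \<partial>M) = 1"
    and second_moment: "(\<integral>\<^sup>+ x. (L x)\<^sup>2 \<partial>M) \<le> 3"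
  shows "ennreal (1/4) \<le> (\<integral>\<^sup>+ x. min 1 (L x) \<partial>M)"
proof -
  have "1 \<le> (\<integral>\<^sup>+ x. min 1 (L x) + ennreal (1/4) * (L x)\<^sup>2 \<partial>M)"
    using nn_integral_mono[OF ennreal_le_min_one_add_square, of M L] mean by simp
  also have "\<dots> \<le> (\<integral>\<^sup>+ x. min 1 (L x) \<partial>M) + ennreal (1/4) * 3"
    using L second_moment by (simp add: nn_integral_add nn_integral_cmult mult_left_mono)
  also have "ennreal (1/4) * 3 = ennreal (3/4)"
    using ennreal_mult[of "1/4" 3] by simp
  finally have "ennreal (1/4) + ennreal (3/4) \<le> (\<integral>\<^sup>+ x. min 1 (L x) \<partial>M) + ennreal (3/4)"
    by (simp add: ennreal_plus[symmetric] del: ennreal_plus)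
  then show ?thesis
    by simp
qed

lemma two_point_lower_bound:
  assumes L: "L \<in> borel_measurable M" and mean: "(\<integral>\<^sup>+ X. L X \<partial>M) = 1"
    and second_moment: "(\<integral>\<^sup>+ X. (L X)\<^sup>2 \<partial>M) \<le> 3"
    and \<phi>\<^sub>0: "\<phi>\<^sub>0 \<in> borel_measurable M" and \<phi>\<^sub>1: "\<phi>\<^sub>1 \<in> borel_measurable M"
    and separation: "\<And>X. X \<in> space M \<Longrightarrow> K \<le> \<phi>\<^sub>0 X + \<phi>\<^sub>1 X"
  shows "ennreal (1/4) * K \<le> (\<integral>\<^sup>+ X. \<phi>\<^sub>1 X \<partial>M) + (\<integral>\<^sup>+ X. L X * \<phi>\<^sub>0 X \<partial>M)"
proof -
  have "ennreal (1/4) * K \<le> (\<integral>\<^sup>+ X. min 1 (L X) \<partial>M) * K"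
    using nn_integral_min_one_ge[OF L mean second_moment] by (rule mult_right_mono) simp
  also have "\<dots> = (\<integral>\<^sup>+ X. min 1 (L X) * K \<partial>M)"
    using L by (simp add: nn_integral_multc)
  also have "\<dots> \<le> (\<integral>\<^sup>+ X. \<phi>\<^sub>1 X + L X * \<phi>\<^sub>0 X \<partial>M)"
  proof (rule nn_integral_mono)
    fix X assume "X \<in> space M"
    then have "min 1 (L X) * K \<le> min 1 (L X) * \<phi>\<^sub>0 X + min 1 (L X) * \<phi>\<^sub>1 X"
      using separation by (simp add: mult_left_mono flip: distrib_left)
    also have "\<dots> \<le> L X * \<phi>\<^sub>0 X + 1 * \<phi>\<^sub>1 X"
      by (intro add_mono mult_right_mono) simp_all
    finally show "min 1 (L X) * K \<le> \<phi>\<^sub>1 X + L X * \<phi>\<^sub>0 X"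
      by (simp add: add.commute)
  qed
  also have "\<dots> = (\<integral>\<^sup>+ X. \<phi>\<^sub>1 X \<partial>M) + (\<integral>\<^sup>+ X. L X * \<phi>\<^sub>0 X \<partial>M)"
    using L \<phi>\<^sub>0 \<phi>\<^sub>1 by (simp add: nn_integral_add)
  finally show ?thesis .
qed

section \<open>The perturbed tent densities\<close>

definition tent :: "real \<Rightarrow> real" where
  "tent x = max 0 (1 - \<bar>x\<bar>)"

lemma tent_nonneg: "0 \<le> tent x"
  by (simp add: tent_def)

lemma tent_le_one: "tent x \<le> 1"
  by (simp add: tent_def)

lemma tent_eq_0: "1 \<le> \<bar>x\<bar> \<Longrightarrow> tent x = 0"
  by (simp add: tent_def)

lemma tent_measurable [measurable]: "tent \<in> borel_measurable borel"
  unfolding tent_def[abs_def] by measurable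

lemma tent_lipschitz: "1-lipschitz_on UNIV tent"
  by (rule lipschitz_onI) (auto simp: tent_def dist_real_def max_def abs_if)

lemma has_integral_tent_left: "((\<lambda>x. 1 + x) has_integral 1/2) {-1..0::real}"
proof -
  have "((\<lambda>x. 1 + x) has_integral ((0 + 0\<^sup>2 / 2) - (-1 + (-1)\<^sup>2 / 2))) {-1..0::real}"
    by (intro fundamental_theorem_of_calculus)
       (auto intro!: derivative_eq_intros simp flip: has_real_derivative_iff_has_vector_derivative)
  then show ?thesis
    by simp
qed

lemma has_integral_tent_right: "((\<lambda>x. 1 - x) has_integral 1/2) {0..1::real}"
proof -
  have "((\<lambda>x. 1 - x) has_integral ((1 - 1\<^sup>2 / 2) - (0 - 0\<^sup>2 / 2))) {0..1::real}"
    by (intro fundamental_theorem_of_calculus)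
       (auto intro!: derivative_eq_intros simp flip: has_real_derivative_iff_has_vector_derivative)
  then show ?thesis
    by simp
qed

lemma nn_integral_tent_nonpos: "(\<integral>\<^sup>+ x. ennreal (tent x) * indicator {..0} x \<partial>lborel) = 1/2"
proof -
  have "(\<integral>\<^sup>+ x. ennreal (1 + x) * indicator {-1..0} x \<partial>lborel) = ennreal (1/2)"
    by (rule nn_integral_has_integral_lebesgue'[OF _ has_integral_tent_left]) simp
  moreover have "ennreal (1 + x) * indicator {-1..0} x = ennreal (tent x) * indicator {..0} x" for x :: real
    by (auto simp: tent_def indicator_def ennreal_neg)
  ultimately show ?thesis
    by (simp add: divide_ennreal_def)
qed

lemma nn_integral_tent: "(\<integral>\<^sup>+ x. ennreal (tent x) \<partial>lborel) = 1"
proof -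
  have "((\<lambda>x. 1 - \<bar>x\<bar>) has_integral (1/2 + 1/2)) {-1..1::real}"
    by (rule has_integral_combine[of "-1" 0 1])
       (auto intro: has_integral_spike_finite[OF _ _ has_integral_tent_left]
          has_integral_spike_finite[OF _ _ has_integral_tent_right])
  then have "(\<integral>\<^sup>+ x. ennreal (1 - \<bar>x\<bar>) * indicator {-1..1} x \<partial>lborel) = 1"
    by (subst nn_integral_has_integral_lebesgue') auto
  moreover have "ennreal (1 - \<bar>x\<bar>) * indicator {-1..1} x = ennreal (tent x)" for x :: real
    by (auto simp: tent_def indicator_def ennreal_neg)
  ultimately show ?thesis
    by simp
qed

lemma nn_integral_tent_affine: "(\<integral>\<^sup>+ x. ennreal (tent (2 * x + t)) \<partial>lborel) = 1/2"
proof -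
  have "2 * (\<integral>\<^sup>+ x. ennreal (tent (2 * x + t)) \<partial>lborel) = 1"
    using nn_integral_real_affine[of "\<lambda>x. ennreal (tent x)" 2 t] nn_integral_tent
    by (simp add: add.commute)
  then show ?thesis
    using ennreal_mult_divide_eq[of 2 "\<integral>\<^sup>+ x. ennreal (tent (2 * x + t)) \<partial>lborel"]
    by (simp add: mult.commute)
qed

(* Odd, supported in [-1, 1] and nonnegative on [0, 1]: adding e * bump to the tent moves
   mass e/4 from (-1, 0) to (0, 1), which pushes the median above e/16. *)
definition bump :: "real \<Rightarrow> real" where
  "bump x = (tent (2 * x - 1) - tent (2 * x + 1)) / 2"

lemma bump_measurable [measurable]: "bump \<in> borel_measurable borel"
  unfolding bump_def[abs_def] by measurable

lemma abs_bump_le_tent: "\<bar>bump x\<bar> \<le> tent x"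
  by (auto simp: bump_def tent_def abs_if max_def field_simps)

lemma bump_nonneg: "0 \<le> x \<Longrightarrow> 0 \<le> bump x"
  by (auto simp: bump_def tent_def abs_if max_def)

lemma bump_lipschitz: "2-lipschitz_on UNIV bump"
  by (rule lipschitz_onI) (auto simp: bump_def tent_def dist_real_def max_def abs_if field_simps)

lemma tent_add_bump_nonneg: "0 \<le> e \<Longrightarrow> e \<le> 1 \<Longrightarrow> 0 \<le> tent x + e * bump x"
proof -
  assume e: "0 \<le> e" "e \<le> 1"
  have "e * - bump x \<le> e * tent x"
    using abs_bump_le_tent[of x] e by (intro mult_left_mono) auto
  moreover have "e * tent x \<le> tent x"
    using e tent_nonneg[of x] by (simp add: mult_left_le_one_le)
  ultimately show ?thesis
    by simp
qed

definition tent_measure :: "real \<Rightarrow> real measure" where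
  "tent_measure e = density lborel (\<lambda>x. ennreal (tent x + e * bump x))"

lemma sets_tent_measure [simp, measurable_cong]: "sets (tent_measure e) = sets borel"
  and space_tent_measure [simp]: "space (tent_measure e) = UNIV"
  by (simp_all add: tent_measure_def)

lemma emeasure_tent_measure:
  "A \<in> sets borel \<Longrightarrow>
    emeasure (tent_measure e) A = (\<integral>\<^sup>+ x. ennreal (tent x + e * bump x) * indicator A x \<partial>lborel)"
  unfolding tent_measure_def by (rule emeasure_density) auto

lemma nn_integral_tent_add_bump:
  assumes e: "0 \<le> e" "e \<le> 1"
  shows "(\<integral>\<^sup>+ x. ennreal (tent x + e * bump x) \<partial>lborel) = 1"
proof -
  \<comment> \<open>bump has integral 0; lacking subtraction in ennreal, add its negative part to both sides\<close>
  have "(\<integral>\<^sup>+ x. ennreal (tent x + e * bump x) \<partial>lborel) + ennreal (e/2) * (1/2)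
      = (\<integral>\<^sup>+ x. ennreal (tent x + e * bump x) + ennreal (e/2) * ennreal (tent (2 * x + 1)) \<partial>lborel)"
    by (simp add: nn_integral_add nn_integral_cmult nn_integral_tent_affine)
  also have "\<dots> = (\<integral>\<^sup>+ x. ennreal (tent x) + ennreal (e/2) * ennreal (tent (2 * x + -1)) \<partial>lborel)"
  proof (rule nn_integral_cong)
    fix x
    have "tent x + e * bump x + e/2 * tent (2 * x + 1) = tent x + e/2 * tent (2 * x + -1)"
      by (simp add: bump_def field_simps)
    then show "ennreal (tent x + e * bump x) + ennreal (e/2) * ennreal (tent (2 * x + 1))
        = ennreal (tent x) + ennreal (e/2) * ennreal (tent (2 * x + -1))"
      using e tent_add_bump_nonneg[OF e, of x] tent_nonneg
      by (simp add: ennreal_mult[symmetric] ennreal_plus[symmetric] del: ennreal_plus)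
  qed
  also have "\<dots> = 1 + ennreal (e/2) * (1/2)"
    using nn_integral_tent_affine[of "-1"] by (simp add: nn_integral_add nn_integral_cmult nn_integral_tent)
  finally show ?thesis
    by (auto simp: ennreal_mult_eq_top_iff ennreal_divide_eq_top_iff)
qed

lemma prob_space_tent_measure: "0 \<le> e \<Longrightarrow> e \<le> 1 \<Longrightarrow> prob_space (tent_measure e)"
  by (rule prob_spaceI) (simp add: emeasure_tent_measure[of UNIV] nn_integral_tent_add_bump)

lemma tent_measure_in_P_Lip:
  assumes e: "0 \<le> e" "e \<le> 1"
  shows "tent_measure e \<in> P_Lip"
  unfolding P_Lip_def
proof (intro CollectI conjI exI allI)
  show "prob_space (tent_measure e)"
    using e by (rule prob_space_tent_measure)
  show "0 \<le> tent x + e * bump x" for x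
    using e by (rule tent_add_bump_nonneg)
  show "(1 + e * 2)-lipschitz_on UNIV (\<lambda>x. tent x + e * bump x)"
    by (intro lipschitz_on_add tent_lipschitz lipschitz_on_cmult_real_nonneg bump_lipschitz e)
qed (simp add: tent_measure_def)

lemma emeasure_tent_measure_singleton: "emeasure (tent_measure e) {y} = 0"
proof -
  have "AE x in lborel. ennreal (tent x + e * bump x) * indicator {y} x = 0"
    using AE_lborel_singleton[of y] by eventually_elim simp
  then show ?thesis
    by (simp add: emeasure_tent_measure nn_integral_cong_AE)
qed

lemma AE_tent_measure_support: "AE x in tent_measure e. \<bar>x\<bar> \<le> 1"
proof -
  have "\<bar>x\<bar> \<le> 1" if "0 < tent x + e * bump x" for x
    using that tent_eq_0[of x] abs_bump_le_tent[of x] by (cases "\<bar>x\<bar> \<le> 1") auto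
  then show ?thesis
    unfolding tent_measure_def by (subst AE_density) (auto intro!: AE_I2)
qed

lemma measure_tent_measure_nonpos: "measure (tent_measure 0) {..0} = 1/2"
proof -
  have "emeasure (tent_measure 0) {..0} = ennreal (1/2)"
    using emeasure_tent_measure[of "{..0}" 0] nn_integral_tent_nonpos by (simp add: divide_ennreal_def)
  then show ?thesis
    unfolding measure_def by (simp only:) (rule enn2real_ennreal, simp)
qed

lemma tent_add_bump_cut_le:
  assumes e: "0 \<le> e" "e \<le> 1"
  shows "ennreal (tent x + e * bump x) * indicator {..b} x + ennreal (e/2 * tent (2 * x + 1))
    \<le> ennreal (tent x) * indicator {..0} x + 2 * indicator {0<..b} x"
proof -
  have "\<bar>e * bump x\<bar> \<le> \<bar>bump x\<bar>"
    using e by (simp add: abs_mult mult_left_le_one_le)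
  then have "e * bump x \<le> 1"
    using abs_ge_self[of "e * bump x"] abs_bump_le_tent[of x] tent_le_one[of x] by linarith
  then have "(tent x + e * bump x) * indicator {..b} x + e/2 * tent (2 * x + 1)
      \<le> tent x * indicator {..0} x + 2 * indicator {0<..b} x"
    using tent_le_one[of x] tent_add_bump_nonneg[OF e, of x]
    by (auto simp: indicator_def tent_eq_0 bump_def)
  then show ?thesis
    using e tent_add_bump_nonneg[OF e, of x] tent_nonneg[of x] tent_nonneg[of "2 * x + 1"]
      tent_eq_0[of "2 * x + 1"]
    by (cases "x \<le> 0"; cases "x \<le> b")
       (simp_all add: indicator_def ennreal_leI ennreal_leI[of _ 2, simplified]
         flip: ennreal_plus del: ennreal_plus)
qed

lemma measure_tent_measure_below_median:
  assumes e: "0 < e" "e \<le> 1"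
  shows "measure (tent_measure e) {..e/16} < 1/2"
proof -
  interpret prob_space "tent_measure e"
    using e by (intro prob_space_tent_measure) auto
  define b where "b = e/16"
  have b: "0 < b" "b \<le> 1/16"
    using e by (auto simp: b_def)
  have affine: "(\<integral>\<^sup>+ x. ennreal (e/2 * tent (2 * x + 1)) \<partial>lborel) = ennreal (e/2) * (1/2)"
    using e tent_nonneg
    by (simp add: ennreal_mult nn_integral_cmult nn_integral_tent_affine del: times_divide_eq_left)
  have "ennreal (measure (tent_measure e) {..b} + e/4) = emeasure (tent_measure e) {..b} + ennreal (e/2) * (1/2)"
    using e by (simp add: emeasure_eq_measure ennreal_divide_numeral divide_ennreal_def[symmetric]
        ennreal_times_divide flip: ennreal_plus)
  also have "\<dots> = (\<integral>\<^sup>+ x. ennreal (tent x + e * bump x) * indicator {..b} x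
      + ennreal (e/2 * tent (2 * x + 1)) \<partial>lborel)"
    by (simp add: emeasure_tent_measure nn_integral_add affine[simplified])
  also have "\<dots> \<le> (\<integral>\<^sup>+ x. ennreal (tent x) * indicator {..0} x + 2 * indicator {0<..b} x \<partial>lborel)"
    using e by (intro nn_integral_mono tent_add_bump_cut_le) auto
  also have "\<dots> = 1/2 + ennreal (2 * b)"
    using b by (simp add: nn_integral_add nn_integral_cmult_indicator nn_integral_tent_nonpos ennreal_mult)
  also have "\<dots> = ennreal (1/2 + 2 * b)"
    using b by (simp add: ennreal_plus divide_ennreal_def)
  finally have "measure (tent_measure e) {..b} + e/4 \<le> 1/2 + 2 * b"
    using b by (subst (asm) ennreal_le_iff) auto
  then show ?thesis
    using e by (simp add: b_def)
qed

lemma tent_measure_median: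
  assumes e: "0 < e" "e \<le> 1"
  shows "\<exists>m>e/16. measure (tent_measure e) {..m} = 1/2"
proof -
  interpret real_distribution "tent_measure e"
    using e by (simp add: real_distribution_def real_distribution_axioms_def prob_space_tent_measure)
  have "measure (tent_measure e) {..1} = 1"
    using AE_tent_measure_support[of e] by (subst prob_eq_1) auto
  then show ?thesis
    using e by (intro median_above[where c = 1] measure_tent_measure_below_median)
      (auto simp: measure_def emeasure_tent_measure_singleton)
qed

(* Where tent x = 0 the division yields 0, so the ratio is 1 there; harmless, as bump vanishes
   there too. *)
definition tent_ratio :: "real \<Rightarrow> real \<Rightarrow> real" where
  "tent_ratio e x = 1 + e * (bump x / tent x)"

lemma tent_ratio_measurable [measurable]: "tent_ratio e \<in> borel_measurable borel"
  unfolding tent_ratio_def[abs_def] by measurable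

lemma abs_tent_ratio_sub_one: "0 \<le> e \<Longrightarrow> \<bar>tent_ratio e x - 1\<bar> \<le> e"
proof -
  assume e: "0 \<le> e"
  have "\<bar>bump x / tent x\<bar> \<le> 1"
    using abs_bump_le_tent[of x] tent_nonneg[of x]
    by (cases "tent x = 0") (simp_all add: abs_divide divide_le_eq_1)
  from mult_left_le[OF this e] show ?thesis
    using e by (simp add: tent_ratio_def abs_mult)
qed

lemma tent_ratio_nonneg: "0 \<le> e \<Longrightarrow> e \<le> 1 \<Longrightarrow> 0 \<le> tent_ratio e x"
  using abs_tent_ratio_sub_one[of e x] by linarith

lemma one_le_tent_ratio: "0 \<le> e \<Longrightarrow> 0 \<le> x \<Longrightarrow> 1 \<le> tent_ratio e x"
  using bump_nonneg[of x] tent_nonneg[of x] by (simp add: tent_ratio_def)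

lemma tent_measure_eq_density:
  assumes e: "0 \<le> e" "e \<le> 1"
  shows "tent_measure e = density (tent_measure 0) (\<lambda>x. ennreal (tent_ratio e x))"
proof -
  have "ennreal (tent x + e * bump x) = ennreal (tent x) * ennreal (tent_ratio e x)" for x
  proof (cases "tent x = 0")
    case True
    then show ?thesis
      using abs_bump_le_tent[of x] by simp
  next
    case False
    then show ?thesis
      using e tent_nonneg[of x] tent_ratio_nonneg[OF e, of x]
      by (simp add: tent_ratio_def distrib_left flip: ennreal_mult)
  qed
  then show ?thesis
    by (simp add: tent_measure_def density_density_eq)
qed

lemma emeasure_tent_measure_0_Ioc_ge:
  assumes "0 \<le> b" "b \<le> 1/2"
  shows "ennreal (b/2) \<le> emeasure (tent_measure 0) {0<..b}"
proof -
  have "ennreal (b/2) = (\<integral>\<^sup>+ x. ennreal (1/2) * indicator {0<..b} x \<partial>lborel)"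
    using assms ennreal_mult[of "1/2" b] by (simp add: nn_integral_cmult_indicator)
  also have "\<dots> \<le> (\<integral>\<^sup>+ x. ennreal (tent x + 0 * bump x) * indicator {0<..b} x \<partial>lborel)"
    using assms by (intro nn_integral_mono) (auto simp: indicator_def tent_def ennreal_leI simp del: ennreal_half)
  also have "\<dots> = emeasure (tent_measure 0) {0<..b}"
    by (simp add: emeasure_tent_measure)
  finally show ?thesis .
qed

lemma PiM_tent_measure_eq_density:
  fixes n :: nat
  assumes e: "0 \<le> e" "e \<le> 1"
  shows "PiM {..<n} (\<lambda>_. tent_measure e)
    = density (PiM {..<n} (\<lambda>_. tent_measure 0)) (\<lambda>X. \<Prod>i<n. ennreal (tent_ratio e (X i)))"
proof -
  have "PiM {..<n} (\<lambda>_. density (tent_measure 0) (\<lambda>x. ennreal (tent_ratio e x)))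
      = density (PiM {..<n} (\<lambda>_. tent_measure 0)) (\<lambda>X. \<Prod>i<n. ennreal (tent_ratio e (X i)))"
    using prob_space_tent_measure[OF e] prob_space_tent_measure[of 0]
    by (intro PiM_density) (auto simp: prob_space_imp_sigma_finite tent_measure_eq_density[OF e, symmetric])
  then show ?thesis
    by (simp add: tent_measure_eq_density[OF e, symmetric])
qed

lemma tent_ratio_product_moments:
  fixes n :: nat
  assumes e: "0 \<le> e" "e \<le> 1"
  shows "(\<integral>\<^sup>+ X. (\<Prod>i<n. ennreal (tent_ratio e (X i))) \<partial>PiM {..<n} (\<lambda>_. tent_measure 0)) = 1"
    and "(\<integral>\<^sup>+ X. (\<Prod>i<n. ennreal (tent_ratio e (X i)))\<^sup>2 \<partial>PiM {..<n} (\<lambda>_. tent_measure 0))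
      \<le> ennreal ((1 + e\<^sup>2) ^ n)"
proof -
  have prob0: "prob_space (tent_measure 0)"
    by (simp add: prob_space_tent_measure)
  have [measurable]: "(\<lambda>x. ennreal (tent_ratio e x)) \<in> borel_measurable (tent_measure 0)"
    by measurable
  have mean: "(\<integral>\<^sup>+ x. ennreal (tent_ratio e x) \<partial>tent_measure 0) = 1"
    using prob_space.emeasure_space_1[OF prob_space_tent_measure[OF e]]
    by (simp add: tent_measure_eq_density[OF e] emeasure_density)
  show "(\<integral>\<^sup>+ X. (\<Prod>i<n. ennreal (tent_ratio e (X i))) \<partial>PiM {..<n} (\<lambda>_. tent_measure 0)) = 1"
    using nn_integral_prod_iid[of "{..<n}" "tent_measure 0" "\<lambda>x. ennreal (tent_ratio e x)"] prob0 mean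
    by (simp add: prob_space_imp_sigma_finite)
  have "(\<integral>\<^sup>+ X. (\<Prod>i<n. ennreal (tent_ratio e (X i)))\<^sup>2 \<partial>PiM {..<n} (\<lambda>_. tent_measure 0))
      = (\<integral>\<^sup>+ x. ennreal ((tent_ratio e x)\<^sup>2) \<partial>tent_measure 0) ^ n"
    using nn_integral_prod_iid[of "{..<n}" "tent_measure 0" "\<lambda>x. ennreal ((tent_ratio e x)\<^sup>2)"] prob0
    by (simp add: prob_space_imp_sigma_finite power_mult_distrib prod_power_distrib ennreal_power
        tent_ratio_nonneg[OF e])
  also have "\<dots> \<le> ennreal (1 + e\<^sup>2) ^ n"
    using nn_integral_square_le[OF prob0 _ mean tent_ratio_nonneg[OF e] abs_tent_ratio_sub_one[OF e(1)]]
    by (intro power_mono) auto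
  also have "\<dots> = ennreal ((1 + e\<^sup>2) ^ n)"
    by (rule ennreal_power) simp
  finally show "(\<integral>\<^sup>+ X. (\<Prod>i<n. ennreal (tent_ratio e (X i)))\<^sup>2 \<partial>PiM {..<n} (\<lambda>_. tent_measure 0))
      \<le> ennreal ((1 + e\<^sup>2) ^ n)" .
qed

lemma tent_ratio_product_second_moment_le_3:
  fixes n :: nat
  assumes n: "1 \<le> n"
  shows "(\<integral>\<^sup>+ X. (\<Prod>i<n. ennreal (tent_ratio (1 / sqrt n) (X i)))\<^sup>2
      \<partial>PiM {..<n} (\<lambda>_. tent_measure 0)) \<le> 3"
proof -
  have "(\<integral>\<^sup>+ X. (\<Prod>i<n. ennreal (tent_ratio (1 / sqrt n) (X i)))\<^sup>2 \<partial>PiM {..<n} (\<lambda>_. tent_measure 0))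
      \<le> ennreal ((1 + 1 / n) ^ n)"
    using tent_ratio_product_moments(2)[of "1 / sqrt n" n] n by (simp add: power_divide)
  also have "\<dots> \<le> ennreal 3"
    using one_add_power_le_exp[of "1 / n" n] n exp_le by (intro ennreal_leI) simp
  finally show ?thesis
    by simp
qed

section \<open>Risk of estimators on the two hypotheses\<close>

definition loss_on :: "real \<Rightarrow> real measure \<Rightarrow> real set \<Rightarrow> real \<Rightarrow> (real \<Rightarrow> real) \<Rightarrow> ennreal" where
  "loss_on p \<mu> R a f = (\<integral>\<^sup>+ x. indicator R x * ennreal (\<bar>f x - a\<bar> powr p) \<partial>\<mu>)"

lemma risk_ge_loss_on:
  assumes "AE x in \<mu>. x \<in> R \<longrightarrow> T0 x = a"
  shows "(\<integral>\<^sup>+ X. loss_on p \<mu> R a (Tn X) \<partial>PiM {..<n} (\<lambda>_. \<mu>)) \<le> risk p n Tn \<mu> T0"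
  unfolding risk_def loss_on_def
proof (rule nn_integral_mono)
  fix X
  have "AE x in \<mu>. indicator R x * ennreal (\<bar>Tn X x - a\<bar> powr p) \<le> ennreal (\<bar>Tn X x - T0 x\<bar> powr p)"
    using assms by eventually_elim (auto simp: indicator_def)
  then show "(\<integral>\<^sup>+ x. indicator R x * ennreal (\<bar>Tn X x - a\<bar> powr p) \<partial>\<mu>)
        \<le> (\<integral>\<^sup>+ x. ennreal (\<bar>Tn X x - T0 x\<bar> powr p) \<partial>\<mu>)"
    by (rule nn_integral_mono_AE)
qed

lemma estimator_section_measurable:
  assumes "estimator n Tn" and "sets M = sets borel" and "X \<in> space (PiM {..<n} (\<lambda>_. M))"
  shows "Tn X \<in> borel_measurable borel"
proof -
  have "X \<in> space (PiM {..<n} (\<lambda>_. borel :: real measure))"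
    using assms(2,3) sets_eq_imp_space_eq[OF sets_PiM_cong[OF refl assms(2)]] by auto
  from measurable_Pair2[OF assms(1)[unfolded estimator_def] this] show ?thesis
    by simp
qed

lemma loss_on_estimator_measurable:
  assumes "estimator n Tn" and "sigma_finite_measure \<mu>" and "sets \<mu> = sets borel" and "sets M = sets borel"
    and [measurable]: "R \<in> sets borel"
  shows "(\<lambda>X. loss_on p \<mu> R a (Tn X)) \<in> borel_measurable (PiM {..<n} (\<lambda>_. M))"
proof -
  interpret sigma_finite_measure \<mu> by fact
  have [measurable]: "(\<lambda>w. Tn (fst w) (snd w)) \<in> borel_measurable (PiM {..<n} (\<lambda>_. borel) \<Otimes>\<^sub>M borel)"
    using assms(1) unfolding estimator_def split_beta .
  have "(\<lambda>w. indicator R (snd w) * ennreal (\<bar>Tn (fst w) (snd w) - a\<bar> powr p))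
      \<in> borel_measurable (PiM {..<n} (\<lambda>_. borel) \<Otimes>\<^sub>M (borel :: real measure))"
    by measurable
  then have "(\<lambda>(X, x). indicator R x * ennreal (\<bar>Tn X x - a\<bar> powr p))
      \<in> borel_measurable (PiM {..<n} (\<lambda>_. M) \<Otimes>\<^sub>M \<mu>)"
    using assms(3,4) unfolding split_beta
    by (subst measurable_cong_sets[OF sets_pair_measure_cong[OF sets_PiM_cong] refl]) auto
  then show ?thesis
    unfolding loss_on_def by (rule borel_measurable_nn_integral)
qed

lemma loss_on_le_density:
  assumes f: "f \<in> borel_measurable \<mu>" and g: "g \<in> borel_measurable \<mu>" and R: "R \<in> sets \<mu>"
    and g_ge_1: "\<And>x. x \<in> R \<Longrightarrow> 1 \<le> g x"
  shows "loss_on p \<mu> R a f \<le> loss_on p (density \<mu> g) R a f"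
proof -
  have "loss_on p \<mu> R a f \<le> (\<integral>\<^sup>+ x. g x * (indicator R x * ennreal (\<bar>f x - a\<bar> powr p)) \<partial>\<mu>)"
    unfolding loss_on_def
    using g_ge_1 mult_right_mono[of 1 "g _"] by (intro nn_integral_mono) (auto simp: indicator_def)
  also have "\<dots> = loss_on p (density \<mu> g) R a f"
    unfolding loss_on_def using f g R by (simp add: nn_integral_density)
  finally show ?thesis .
qed

lemma half_powr_le_abs_powr_add:
  fixes t p :: real
  assumes "0 \<le> p"
  shows "(1/2) powr p \<le> \<bar>t\<bar> powr p + \<bar>t - 1\<bar> powr p"
proof (cases "1/2 \<le> \<bar>t\<bar>")
  case True
  then have "(1/2) powr p \<le> \<bar>t\<bar> powr p"
    using assms by (intro powr_mono2) auto
  then show ?thesis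
    using powr_ge_zero[of "\<bar>t - 1\<bar>" p] by linarith
next
  case False
  then have "(1/2) powr p \<le> \<bar>t - 1\<bar> powr p"
    using assms by (intro powr_mono2) auto
  then show ?thesis
    using powr_ge_zero[of "\<bar>t\<bar>" p] by linarith
qed

lemma loss_on_zero_add_one_ge:
  assumes p: "0 \<le> p" and f: "f \<in> borel_measurable \<mu>" and R: "R \<in> sets \<mu>"
  shows "ennreal ((1/2) powr p) * emeasure \<mu> R \<le> loss_on p \<mu> R 0 f + loss_on p \<mu> R 1 f"
proof -
  have "ennreal ((1/2) powr p) * emeasure \<mu> R = (\<integral>\<^sup>+ x. ennreal ((1/2) powr p) * indicator R x \<partial>\<mu>)"
    using R by (simp add: nn_integral_cmult_indicator)
  also have "\<dots> \<le> (\<integral>\<^sup>+ x. indicator R x * ennreal (\<bar>f x - 0\<bar> powr p)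
      + indicator R x * ennreal (\<bar>f x - 1\<bar> powr p) \<partial>\<mu>)"
    using half_powr_le_abs_powr_add[OF p]
    by (intro nn_integral_mono) (auto simp: indicator_def ennreal_leI simp flip: ennreal_plus)
  also have "\<dots> = loss_on p \<mu> R 0 f + loss_on p \<mu> R 1 f"
    unfolding loss_on_def using f R by (simp add: nn_integral_add)
  finally show ?thesis .
qed

lemma ot_map_tent_measure:
  assumes e: "0 \<le> e" "e \<le> 1" and median: "measure (tent_measure e) {..m} = 1/2"
    and ot: "is_ot_map (tent_measure e) nu_half T"
  shows "AE x in tent_measure e. T x = indicator {m<..} x"
  using e median ot
  by (intro is_ot_map_nu_half_eq_median_threshold[where B = 1])
     (auto simp: prob_space_tent_measure emeasure_tent_measure_singleton AE_tent_measure_support)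

lemma loss_on_le_risk_tent_measure_0:
  assumes R: "R \<subseteq> {0<..}"
  shows "(\<integral>\<^sup>+ X. loss_on p (tent_measure 0) R 1 (Tn X) \<partial>PiM {..<n} (\<lambda>_. tent_measure 0))
    \<le> (INF T0\<in>{T. is_ot_map (tent_measure 0) nu_half T}. risk p n Tn (tent_measure 0) T0)"
proof (rule INF_greatest)
  fix T0 assume "T0 \<in> {T. is_ot_map (tent_measure 0) nu_half T}"
  then have "AE x in tent_measure 0. T0 x = indicator {0<..} x"
    by (intro ot_map_tent_measure) (auto simp: measure_tent_measure_nonpos)
  then have "AE x in tent_measure 0. x \<in> R \<longrightarrow> T0 x = 1"
    by eventually_elim (use R in auto)
  then show "(\<integral>\<^sup>+ X. loss_on p (tent_measure 0) R 1 (Tn X) \<partial>PiM {..<n} (\<lambda>_. tent_measure 0))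
      \<le> risk p n Tn (tent_measure 0) T0"
    by (rule risk_ge_loss_on)
qed

lemma likelihood_loss_on_le_risk_tent_measure:
  fixes n :: nat
  assumes e: "0 < e" "e \<le> 1" and Tn: "estimator n Tn"
  defines "R \<equiv> {0<..e/16}"
  shows "(\<integral>\<^sup>+ X. (\<Prod>i<n. ennreal (tent_ratio e (X i))) * loss_on p (tent_measure 0) R 0 (Tn X)
      \<partial>PiM {..<n} (\<lambda>_. tent_measure 0))
    \<le> (INF T1\<in>{T. is_ot_map (tent_measure e) nu_half T}. risk p n Tn (tent_measure e) T1)"
proof (rule INF_greatest)
  have e': "0 \<le> e" "e \<le> 1"
    using e by auto
  obtain m where m: "e/16 < m" "measure (tent_measure e) {..m} = 1/2"
    using tent_measure_median[OF e] by blast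
  fix T1 assume "T1 \<in> {T. is_ot_map (tent_measure e) nu_half T}"
  then have "AE x in tent_measure e. T1 x = indicator {m<..} x"
    using ot_map_tent_measure[OF e' m(2)] by simp
  then have T1_on_R: "AE x in tent_measure e. x \<in> R \<longrightarrow> T1 x = 0"
    by eventually_elim (use m(1) in \<open>auto simp: R_def\<close>)
  have loss_meas: "(\<lambda>X. loss_on p (tent_measure 0) R 0 (Tn X))
      \<in> borel_measurable (PiM {..<n} (\<lambda>_. tent_measure 0))"
    using Tn prob_space_tent_measure[of 0]
    by (intro loss_on_estimator_measurable) (auto simp: R_def prob_space_imp_sigma_finite)
  have "(\<integral>\<^sup>+ X. (\<Prod>i<n. ennreal (tent_ratio e (X i))) * loss_on p (tent_measure 0) R 0 (Tn X)
      \<partial>PiM {..<n} (\<lambda>_. tent_measure 0))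
      = (\<integral>\<^sup>+ X. loss_on p (tent_measure 0) R 0 (Tn X) \<partial>PiM {..<n} (\<lambda>_. tent_measure e))"
    using loss_meas by (simp add: PiM_tent_measure_eq_density[OF e'] nn_integral_density)
  also have "\<dots> \<le> (\<integral>\<^sup>+ X. loss_on p (tent_measure e) R 0 (Tn X) \<partial>PiM {..<n} (\<lambda>_. tent_measure e))"
  proof (rule nn_integral_mono)
    fix X assume "X \<in> space (PiM {..<n} (\<lambda>_. tent_measure e))"
    then have "Tn X \<in> borel_measurable borel"
      using Tn by (intro estimator_section_measurable) auto
    then show "loss_on p (tent_measure 0) R 0 (Tn X) \<le> loss_on p (tent_measure e) R 0 (Tn X)"
      unfolding tent_measure_eq_density[OF e'] using e'
      by (intro loss_on_le_density) (auto simp: R_def one_le_tent_ratio)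
  qed
  also have "\<dots> \<le> risk p n Tn (tent_measure e) T1"
    using T1_on_R by (rule risk_ge_loss_on)
  finally show "(\<integral>\<^sup>+ X. (\<Prod>i<n. ennreal (tent_ratio e (X i))) * loss_on p (tent_measure 0) R 0 (Tn X)
      \<partial>PiM {..<n} (\<lambda>_. tent_measure 0)) \<le> risk p n Tn (tent_measure e) T1" .
qed

lemma tent_two_point_risk_bound:
  fixes n :: nat and p :: real
  assumes n: "1 \<le> n" and p: "0 \<le> p" and Tn: "estimator n Tn"
  defines "e \<equiv> 1 / sqrt n"
  shows "ennreal (1/4) * (ennreal ((1/2) powr p) * emeasure (tent_measure 0) {0<..e/16})
    \<le> (INF T0\<in>{T. is_ot_map (tent_measure 0) nu_half T}. risk p n Tn (tent_measure 0) T0)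
      + (INF T1\<in>{T. is_ot_map (tent_measure e) nu_half T}. risk p n Tn (tent_measure e) T1)"
proof -
  have e: "0 < e" "e \<le> 1"
    using n by (auto simp: e_def)
  define R where "R = {0<..e/16}"
  define P\<^sub>0 where "P\<^sub>0 = PiM {..<n} (\<lambda>_. tent_measure 0)"
  define L where "L X = (\<Prod>i<n. ennreal (tent_ratio e (X i)))" for X
  define \<phi> where "\<phi> a X = loss_on p (tent_measure 0) R a (Tn X)" for a X
  have L: "L \<in> borel_measurable P\<^sub>0"
    unfolding L_def[abs_def] P\<^sub>0_def by measurable
  have \<phi>: "\<phi> a \<in> borel_measurable P\<^sub>0" for a
    unfolding \<phi>_def[abs_def] P\<^sub>0_def using Tn prob_space_tent_measure[of 0]
    by (intro loss_on_estimator_measurable) (auto simp: R_def prob_space_imp_sigma_finite)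
  have separation: "ennreal ((1/2) powr p) * emeasure (tent_measure 0) R \<le> \<phi> 0 X + \<phi> 1 X"
    if "X \<in> space P\<^sub>0" for X
  proof -
    have "Tn X \<in> borel_measurable (tent_measure 0)"
      using estimator_section_measurable[OF Tn _ that[unfolded P\<^sub>0_def]]
      by (simp add: measurable_cong_sets[OF sets_tent_measure refl])
    then show ?thesis
      unfolding \<phi>_def by (intro loss_on_zero_add_one_ge p) (simp_all add: R_def)
  qed
  have "ennreal (1/4) * (ennreal ((1/2) powr p) * emeasure (tent_measure 0) R)
      \<le> (\<integral>\<^sup>+ X. \<phi> 1 X \<partial>P\<^sub>0) + (\<integral>\<^sup>+ X. L X * \<phi> 0 X \<partial>P\<^sub>0)"
    using tent_ratio_product_moments(1)[of e n] tent_ratio_product_second_moment_le_3[OF n] e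
    by (intro two_point_lower_bound L \<phi> separation) (auto simp: L_def P\<^sub>0_def e_def)
  also have "\<dots> \<le> (INF T0\<in>{T. is_ot_map (tent_measure 0) nu_half T}. risk p n Tn (tent_measure 0) T0)
      + (INF T1\<in>{T. is_ot_map (tent_measure e) nu_half T}. risk p n Tn (tent_measure e) T1)"
    unfolding \<phi>_def P\<^sub>0_def L_def R_def using e
    by (intro add_mono loss_on_le_risk_tent_measure_0 likelihood_loss_on_le_risk_tent_measure Tn) auto
  finally show ?thesis
    by (simp add: R_def)
qed

lemma minimax_risk_lower_bound:
  fixes n :: nat and p :: real
  assumes n: "1 \<le> n" and p: "0 \<le> p" and Tn: "estimator n Tn"
  shows "ennreal ((1/2) powr p / 256 / sqrt n)
    \<le> (SUP \<mu>\<in>P_Lip. INF T0\<in>{T. is_ot_map \<mu> nu_half T}. risk p n Tn \<mu> T0)" (is "_ \<le> ?S")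
proof -
  define e where "e = 1 / sqrt n"
  have e: "0 < e" "e \<le> 1"
    using n by (auto simp: e_def)
  have "2 * ennreal ((1/2) powr p / 256 / sqrt n)
      = ennreal (1/4) * (ennreal ((1/2) powr p) * ennreal (e/16/2))"
    by (simp add: e_def ennreal_mult[symmetric] ennreal_numeral[symmetric] del: ennreal_numeral)
  also have "\<dots> \<le> ennreal (1/4) * (ennreal ((1/2) powr p) * emeasure (tent_measure 0) {0<..e/16})"
    using e by (intro mult_left_mono emeasure_tent_measure_0_Ioc_ge) auto
  also have "\<dots> \<le> (INF T0\<in>{T. is_ot_map (tent_measure 0) nu_half T}. risk p n Tn (tent_measure 0) T0)
      + (INF T1\<in>{T. is_ot_map (tent_measure e) nu_half T}. risk p n Tn (tent_measure e) T1)"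
    unfolding e_def by (rule tent_two_point_risk_bound[OF n p Tn])
  also have "\<dots> \<le> ?S + ?S"
    using e by (intro add_mono SUP_upper tent_measure_in_P_Lip) auto
  finally have "2 * ennreal ((1/2) powr p / 256 / sqrt n) \<le> 2 * ?S"
    by (simp add: mult_2)
  then show ?thesis
    by (subst (asm) ennreal_mult_le_mult_iff) auto
qed

theorem theorem5p3:
  fixes p :: real
  assumes "1 \<le> p"
  shows "\<exists>c>0. \<forall>\<^sub>F n in sequentially. \<forall>Tn. estimator n Tn \<longrightarrow>
           ennreal (c / sqrt (real n)) \<le>
             (SUP \<mu>\<in>P_Lip. INF T0\<in>{T. is_ot_map \<mu> nu_half T}. risk p n Tn \<mu> T0)"
proof (intro exI[of _ "(1/2) powr p / 256"] conjI)
  show "0 < (1/2::real) powr p / 256"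
    by simp
  show "\<forall>\<^sub>F n in sequentially. \<forall>Tn. estimator n Tn \<longrightarrow>
      ennreal ((1/2) powr p / 256 / sqrt (real n))
        \<le> (SUP \<mu>\<in>P_Lip. INF T0\<in>{T. is_ot_map \<mu> nu_half T}. risk p n Tn \<mu> T0)"
    using eventually_ge_at_top[of "1::nat"]
  proof eventually_elim
    case (elim n)
    show ?case
      using assms by (intro allI impI minimax_risk_lower_bound elim) auto
  qed
qed

end
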